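(* Let $A$ be a vector space with bilinear operations $\cdot,\circ$, and $[x,y]=x\circ y-y\circ x$. (1) If $(A,\cdot,[-,-])$ is a transposed Poisson algebra, $(A,\circ)$ is pre-Lie, and $(-\mathcal{L}^*_{\cdot},\mathcal{L}^*_{\circ},A^* )$ is a representation of the transposed Poisson algebra $(A,\cdot,[-,-])$, then $(A,\cdot,\circ)$ is a TCPD algebra. (2) Conversely, if $(A,\cdot,\circ)$ is a TCPD algebra, then $(A,\cdot,[-,-])$ is a transposed Poisson algebra with representation $(-\mathcal{L}^*_{\cdot},\mathcal{L}^*_{\circ},A^* )$.
   Context: Finite-dimensional spaces, characteristic zero. $\mathcal{L}_\ast(x)y=x\ast y$; for linear $\rho:A\to\mathrm{End}(V)$, $\langle\rho^*(x)v^*,u\rangle=-\langle v^*,\rho(x)u\rangle$. Pre-Lie: $(x\circ y)\circ z-x\circ(y\circ z)=(y\circ x)\circ z-y\circ(x\circ z)$. Transposed Poisson algebra: $(A,\cdot)$ commutative associative, $(A,[-,-])$ Lie, $2z\cdot[x,y]=[z\cdot x,y]+[x,z\cdot y]$. A representation of a transposed Poisson algebra is $(\mu,\rho,V)$ with $\mu(x\cdot y)=\mu(x)\mu(y)$, $\rho([x,y])=[\rho(x),\rho(y)]$, $2\mu(x)\rho(y)=\rho(x\cdot y)+\rho(y)\mu(x)$, $2\mu([x,y])=\rho(x)\mu(y)-\rho(y)\mu(x)$. A TCPD algebra is $(A,\cdot,\circ)$ with $(A,\cdot)$ commutative associative, $(A,\circ)$ pre-Lie, and for all $x,y,z$: $2x\circ(y\cdot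 z)=(z\cdot x)\circ y+z\cdot(x\circ y)$; $2(x\circ y)\cdot z-2(y\circ x)\cdot z=x\cdot(y\circ z)-y\cdot(x\circ z)$; $3y\circ(z\cdot x)-3x\circ(z\cdot y)-(z\cdot x)\circ y+(z\cdot y)\circ x=0$. *)

theory Defs
  imports Main
begin

text \<open>A finite-dimensional vector space A over a field 'k of characteristic zero is
  modelled in coordinates with respect to a basis indexed by a finite type 'n:
  vectors are functions 'n => 'k. The dual space A^* is identified with the same
  coordinate space via the pairing  pair f u = sum_i f i * u i  (dual basis).\<close>

type_synonym ('n, 'k) vec = "'n \<Rightarrow> 'k"

definition vadd :: "('n, 'k::field) vec \<Rightarrow> ('n, 'k) vec \<Rightarrow> ('n, 'k) vec" where
  "vadd x y = (\<lambda>i. x i + y i)"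

definition vsub :: "('n, 'k::field) vec \<Rightarrow> ('n, 'k) vec \<Rightarrow> ('n, 'k) vec" where
  "vsub x y = (\<lambda>i. x i - y i)"

definition vsc :: "'k::field \<Rightarrow> ('n, 'k) vec \<Rightarrow> ('n, 'k) vec" where
  "vsc c x = (\<lambda>i. c * x i)"

definition vzero :: "('n, 'k::field) vec" where
  "vzero = (\<lambda>i. 0)"

definition pair :: "('n::finite, 'k::field) vec \<Rightarrow> ('n, 'k) vec \<Rightarrow> 'k" where
  "pair f u = (\<Sum>i\<in>UNIV. f i * u i)"

definition unitv :: "'n \<Rightarrow> ('n, 'k::field) vec" where
  "unitv j = (\<lambda>i. if i = j then 1 else 0)"

definition linear_map :: "(('n, 'k::field) vec \<Rightarrow> ('m, 'k) vec) \<Rightarrow> bool" where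
  "linear_map f \<longleftrightarrow> (\<forall>x y. f (vadd x y) = vadd (f x) (f y)) \<and> (\<forall>c x. f (vsc c x) = vsc c (f x))"

definition bilinear_op :: "(('n, 'k::field) vec \<Rightarrow> ('n, 'k) vec \<Rightarrow> ('n, 'k) vec) \<Rightarrow> bool" where
  "bilinear_op m \<longleftrightarrow> (\<forall>x. linear_map (m x)) \<and> (\<forall>y. linear_map (\<lambda>x. m x y))"

definition commutator :: "(('n, 'k::field) vec \<Rightarrow> ('n, 'k) vec \<Rightarrow> ('n, 'k) vec) \<Rightarrow> ('n, 'k) vec \<Rightarrow> ('n, 'k) vec \<Rightarrow> ('n, 'k) vec" where
  "commutator m x y = vsub (m x y) (m y x)"

text \<open>Left multiplication operator L_m(x) y = m x y, and its dual L_m^*(x) on A^*,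
  characterised by  pair (L^*(x) v) u = - pair v (m x u); the i-th coordinate of a
  functional is its value on the i-th basis vector.\<close>
definition dual_rep :: "(('n::finite, 'k::field) vec \<Rightarrow> ('n, 'k) vec \<Rightarrow> ('n, 'k) vec) \<Rightarrow> ('n, 'k) vec \<Rightarrow> ('n, 'k) vec \<Rightarrow> ('n, 'k) vec" where
  "dual_rep \<rho> x v = (\<lambda>i. - pair v (\<rho> x (unitv i)))"

definition neg_op :: "(('n, 'k::field) vec \<Rightarrow> ('m, 'k) vec \<Rightarrow> ('m, 'k) vec) \<Rightarrow> ('n, 'k) vec \<Rightarrow> ('m, 'k) vec \<Rightarrow> ('m, 'k) vec" where
  "neg_op \<mu> x v = (\<lambda>i. - \<mu> x v i)"

definition comm_assoc :: "(('n, 'k::field) vec \<Rightarrow> ('n, 'k) vec \<Rightarrow> ('n, 'k) vec) \<Rightarrow> bool" where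
  "comm_assoc d \<longleftrightarrow> (\<forall>x y. d x y = d y x) \<and> (\<forall>x y z. d (d x y) z = d x (d y z))"

definition lie_alg :: "(('n, 'k::field) vec \<Rightarrow> ('n, 'k) vec \<Rightarrow> ('n, 'k) vec) \<Rightarrow> bool" where
  "lie_alg b \<longleftrightarrow> (\<forall>x. b x x = vzero) \<and>
     (\<forall>x y z. vadd (vadd (b x (b y z)) (b y (b z x))) (b z (b x y)) = vzero)"

definition pre_lie :: "(('n, 'k::field) vec \<Rightarrow> ('n, 'k) vec \<Rightarrow> ('n, 'k) vec) \<Rightarrow> bool" where
  "pre_lie c \<longleftrightarrow> (\<forall>x y z. vsub (c (c x y) z) (c x (c y z)) = vsub (c (c y x) z) (c y (c x z)))"

definition transposed_poisson :: "(('n, 'k::field) vec \<Rightarrow> ('n, 'k) vec \<Rightarrow> ('n, 'k) vec) \<Rightarrow> (('n, 'k) vec \<Rightarrow> ('n, 'k) vec \<Rightarrow> ('n, 'k) vec) \<Rightarrow> bool" where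
  "transposed_poisson d b \<longleftrightarrow> comm_assoc d \<and> lie_alg b \<and>
     (\<forall>x y z. vsc 2 (d z (b x y)) = vadd (b (d z x) y) (b x (d z y)))"

definition tp_rep :: "(('n, 'k::field) vec \<Rightarrow> ('n, 'k) vec \<Rightarrow> ('n, 'k) vec) \<Rightarrow> (('n, 'k) vec \<Rightarrow> ('n, 'k) vec \<Rightarrow> ('n, 'k) vec)
     \<Rightarrow> (('n, 'k) vec \<Rightarrow> ('m, 'k) vec \<Rightarrow> ('m, 'k) vec) \<Rightarrow> (('n, 'k) vec \<Rightarrow> ('m, 'k) vec \<Rightarrow> ('m, 'k) vec) \<Rightarrow> bool" where
  "tp_rep d b \<mu> \<rho> \<longleftrightarrow>
     (\<forall>x. linear_map (\<mu> x)) \<and> (\<forall>x. linear_map (\<rho> x)) \<and>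
     (\<forall>x y. \<mu> (vadd x y) = (\<lambda>v. vadd (\<mu> x v) (\<mu> y v))) \<and> (\<forall>c x. \<mu> (vsc c x) = (\<lambda>v. vsc c (\<mu> x v))) \<and>
     (\<forall>x y. \<rho> (vadd x y) = (\<lambda>v. vadd (\<rho> x v) (\<rho> y v))) \<and> (\<forall>c x. \<rho> (vsc c x) = (\<lambda>v. vsc c (\<rho> x v))) \<and>
     (\<forall>x y v. \<mu> (d x y) v = \<mu> x (\<mu> y v)) \<and>
     (\<forall>x y v. \<rho> (b x y) v = vsub (\<rho> x (\<rho> y v)) (\<rho> y (\<rho> x v))) \<and>
     (\<forall>x y v. vsc 2 (\<mu> x (\<rho> y v)) = vadd (\<rho> (d x y) v) (\<rho> y (\<mu> x v))) \<and>
     (\<forall>x y v. vsc 2 (\<mu> (b x y) v) = vsub (\<rho> x (\<mu> y v)) (\<rho> y (\<mu> x v)))"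

definition tcpd :: "(('n, 'k::field) vec \<Rightarrow> ('n, 'k) vec \<Rightarrow> ('n, 'k) vec) \<Rightarrow> (('n, 'k) vec \<Rightarrow> ('n, 'k) vec \<Rightarrow> ('n, 'k) vec) \<Rightarrow> bool" where
  "tcpd d c \<longleftrightarrow> comm_assoc d \<and> pre_lie c \<and>
     (\<forall>x y z. vsc 2 (c x (d y z)) = vadd (c (d z x) y) (d z (c x y))) \<and>
     (\<forall>x y z. vsub (vsc 2 (d (c x y) z)) (vsc 2 (d (c y x) z)) = vsub (d x (c y z)) (d y (c x z))) \<and>
     (\<forall>x y z. vadd (vsub (vsub (vsc 3 (c y (d z x))) (vsc 3 (c x (d z y)))) (c (d z x) y)) (c (d z y) x) = vzero)"

end

theory Submission
  imports Defs
begin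

text \<open>Via the pairing, each axiom of the representation (-L^*_dot, L^*_circ, A^*) is equivalent
  to an identity on A itself: multiplicativity of -L^*_dot follows from dot being commutative
  associative, L^*_circ preserving the commutator is the pre-Lie identity, and the two mixed
  axioms become exactly the first two TCPD identities. Given these, the transposed Poisson
  compatibility and the third TCPD identity have the same defect at every point, so each implies
  the other. No division occurs.\<close>

lemma vadd_apply [simp]: "vadd x y i = x i + y i" by (simp add: vadd_def)
lemma vsub_apply [simp]: "vsub x y i = x i - y i" by (simp add: vsub_def)
lemma vsc_apply [simp]: "vsc c x i = c * x i" by (simp add: vsc_def)
lemma vzero_apply [simp]: "vzero i = 0" by (simp add: vzero_def)

lemma linear_map_vadd: "linear_map f \<Longrightarrow> f (vadd a b) = vadd (f a) (f b)"
  by (simp add: linear_map_def)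

lemma linear_map_vsc: "linear_map f \<Longrightarrow> f (vsc k a) = vsc k (f a)"
  by (simp add: linear_map_def)

lemma linear_map_vsub:
  assumes "linear_map f"
  shows "f (vsub a b) = vsub (f a) (f b)"
proof -
  have "vsub a b = vadd a (vsc (-1) b)" by (simp add: fun_eq_iff)
  then have "f (vsub a b) = vadd (f a) (vsc (-1) (f b))"
    using assms by (simp only: linear_map_vadd linear_map_vsc)
  then show ?thesis by (simp add: fun_eq_iff)
qed

lemma linear_map_basis_expansion:
  fixes f :: "('n::finite, 'k::field) vec \<Rightarrow> ('m, 'k) vec"
  assumes lin: "linear_map f"
  shows "f u = (\<lambda>j. \<Sum>i\<in>UNIV. u i * f (unitv i) j)"
proof -
  have "f (\<lambda>j. if j \<in> S then u j else 0) = (\<lambda>j. \<Sum>i\<in>S. u i * f (unitv i) j)"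
    if "finite S" for S
    using that
  proof (induction S rule: finite_induct)
    case empty
    have "f (vsc 0 vzero) = vsc 0 (f vzero)" using lin by (rule linear_map_vsc)
    then show ?case by (simp add: vsc_def vzero_def)
  next
    case (insert a S)
    have "(\<lambda>j. if j \<in> insert a S then u j else 0)
        = vadd (vsc (u a) (unitv a)) (\<lambda>j. if j \<in> S then u j else 0)"
      using insert.hyps by (auto simp: fun_eq_iff unitv_def)
    then have "f (\<lambda>j. if j \<in> insert a S then u j else 0)
        = vadd (vsc (u a) (f (unitv a))) (f (\<lambda>j. if j \<in> S then u j else 0))"
      using lin by (simp only: linear_map_vadd linear_map_vsc)
    then show ?case using insert by (simp add: fun_eq_iff)
  qed
  from this[of UNIV] show ?thesis by simp
qed

lemma bilinear_op_simps:
  assumes "bilinear_op m"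
  shows "m x (vadd a b) = vadd (m x a) (m x b)" "m x (vsub a b) = vsub (m x a) (m x b)"
    "m x (vsc k a) = vsc k (m x a)" "m (vadd a b) y = vadd (m a y) (m b y)"
    "m (vsub a b) y = vsub (m a y) (m b y)" "m (vsc k a) y = vsc k (m a y)"
  using assms unfolding bilinear_op_def
  by (auto intro: linear_map_vadd linear_map_vsub linear_map_vsc
           dest: spec[of "\<lambda>y. linear_map (\<lambda>x. m x y)" y])

lemma pair_vadd [simp]:
  "pair (vadd a b) w = pair a w + pair b w" "pair w (vadd a b) = pair w a + pair w b"
  by (simp_all add: pair_def algebra_simps sum.distrib)

lemma pair_vsub [simp]:
  "pair (vsub a b) w = pair a w - pair b w" "pair w (vsub a b) = pair w a - pair w b"
  by (simp_all add: pair_def algebra_simps sum_subtractf)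

lemma pair_vsc [simp]:
  "pair (vsc k a) w = k * pair a w" "pair w (vsc k a) = k * pair w a"
  by (simp_all add: pair_def algebra_simps sum_distrib_left)

lemma pair_unitv: "pair a (unitv i) = a i" "pair (unitv i) a = a i"
proof -
  have "(\<Sum>j\<in>UNIV. a j * unitv i j) = a i" "(\<Sum>j\<in>UNIV. unitv i j * a j) = a i"
    by (simp_all add: unitv_def if_distrib[of "\<lambda>t. a _ * t"] if_distrib[of "\<lambda>t. t * a _"]
        cong: if_cong)
  then show "pair a (unitv i) = a i" "pair (unitv i) a = a i" by (simp_all add: pair_def)
qed

lemma vec_eq_iff_pair_left: "a = b \<longleftrightarrow> (\<forall>w. pair a w = pair b w)"
  by (metis pair_unitv(1) ext)

lemma vec_eq_iff_pair_right: "a = b \<longleftrightarrow> (\<forall>v. pair v a = pair v b)"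
  by (metis pair_unitv(2) ext)

lemma pair_dual_rep:
  assumes "linear_map (m x)"
  shows "pair (dual_rep m x v) w = - pair v (m x w)"
proof -
  have "pair v (m x w) = (\<Sum>j\<in>UNIV. v j * (\<Sum>i\<in>UNIV. w i * m x (unitv i) j))"
    by (subst linear_map_basis_expansion[OF assms]) (simp add: pair_def)
  also have "\<dots> = (\<Sum>i\<in>UNIV. \<Sum>j\<in>UNIV. v j * m x (unitv i) j * w i)"
    by (simp add: sum_distrib_left mult_ac) (rule sum.swap)
  finally show ?thesis
    by (simp add: dual_rep_def pair_def sum_distrib_right sum_negf)
qed

lemma pair_neg_dual_rep:
  assumes "linear_map (m x)"
  shows "pair (neg_op (dual_rep m) x v) w = pair v (m x w)"
  using pair_dual_rep[of m x v w, OF assms]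
  by (simp add: neg_op_def pair_def sum_negf flip: minus_mult_left)

text \<open>An identity between operators on A^* holds iff the transposed identity holds on A,
  as soon as their pairings differ by a nonzero factor.\<close>
lemma dual_identity_iff:
  fixes k :: "'k::field"
  assumes "k \<noteq> 0"
    and transpose: "\<And>x y v w. pair (L x y v) w - pair (R x y v) w
                        = k * (pair v (P x y w) - pair v (Q x y w))"
  shows "(\<forall>x y v. L x y v = (R x y v :: ('n::finite, 'k) vec))
     \<longleftrightarrow> (\<forall>x y w. P x y w = (Q x y w :: ('n, 'k) vec))"
proof -
  have "pair (L x y v) w = pair (R x y v) w \<longleftrightarrow> pair v (P x y w) = pair v (Q x y w)" for x y v w
    using transpose[of x y v w] \<open>k \<noteq> 0\<close> by (metis eq_iff_diff_eq_0 mult_eq_0_iff)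
  then show ?thesis
    by (metis vec_eq_iff_pair_left[of "L _ _ _"] vec_eq_iff_pair_right[of "P _ _ _"])
qed

lemma pre_lie_iff_left_mult_commutator:
  assumes "bilinear_op m"
  shows "pre_lie m \<longleftrightarrow> (\<forall>x y w. m (commutator m x y) w = vsub (m x (m y w)) (m y (m x w)))"
  unfolding pre_lie_def commutator_def bilinear_op_simps[OF assms]
  by (simp add: fun_eq_iff algebra_simps)

lemma lie_alg_commutator:
  assumes "bilinear_op m" and "pre_lie m"
  shows "lie_alg (commutator m)"
  unfolding lie_alg_def
proof (intro conjI allI)
  fix x y z
  show "commutator m x x = vzero" by (simp add: commutator_def fun_eq_iff)
  have pl: "m (m a b) e j - m a (m b e) j = m (m b a) e j - m b (m a e) j" for a b e j
    using fun_cong[OF assms(2)[unfolded pre_lie_def, rule_format, of a b e], of j] by simp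
  show "vadd (vadd (commutator m x (commutator m y z)) (commutator m y (commutator m z x)))
          (commutator m z (commutator m x y)) = vzero"
  proof (rule ext)
    fix j
    show "vadd (vadd (commutator m x (commutator m y z)) (commutator m y (commutator m z x)))
            (commutator m z (commutator m x y)) j = vzero j"
      using pl[of x y z j] pl[of y z x j] pl[of z x y j]
      by (simp add: commutator_def bilinear_op_simps[OF assms(1)] algebra_simps) algebra
  qed
qed

lemma coadjoint_maps_linear:
  assumes bd: "bilinear_op d" and bc: "bilinear_op c"
  shows "(\<forall>x. linear_map (neg_op (dual_rep d) x)) \<and> (\<forall>x. linear_map (dual_rep c x)) \<and>
     (\<forall>x y. neg_op (dual_rep d) (vadd x y) = (\<lambda>v. vadd (neg_op (dual_rep d) x v) (neg_op (dual_rep d) y v))) \<and>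
     (\<forall>k x. neg_op (dual_rep d) (vsc k x) = (\<lambda>v. vsc k (neg_op (dual_rep d) x v))) \<and>
     (\<forall>x y. dual_rep c (vadd x y) = (\<lambda>v. vadd (dual_rep c x v) (dual_rep c y v))) \<and>
     (\<forall>k x. dual_rep c (vsc k x) = (\<lambda>v. vsc k (dual_rep c x v)))"
  by (simp add: linear_map_def neg_op_def dual_rep_def fun_eq_iff
      bilinear_op_simps[OF bd] bilinear_op_simps[OF bc] algebra_simps)

lemma tp_rep_coadjoint_iff:
  assumes bd: "bilinear_op d" and bc: "bilinear_op c" and "comm_assoc d"
  shows "tp_rep d (commutator c) (neg_op (dual_rep d)) (dual_rep c) \<longleftrightarrow>
    pre_lie c \<and>
    (\<forall>x y z. vsc 2 (c x (d y z)) = vadd (c (d z x) y) (d z (c x y))) \<and>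
    (\<forall>x y z. vsub (vsc 2 (d (c x y) z)) (vsc 2 (d (c y x) z)) = vsub (d x (c y z)) (d y (c x z)))"
proof -
  have comm: "d a b = d b a" and assoc: "d (d a b) e = d a (d b e)" for a b e
    using \<open>comm_assoc d\<close> by (auto simp: comm_assoc_def)
  have "linear_map (d x)" "linear_map (c x)" for x
    using bd bc by (simp_all add: bilinear_op_def)
  note pairs = pair_dual_rep[OF this(2)] pair_neg_dual_rep[OF this(1)]
  have mult: "(\<forall>x y v. neg_op (dual_rep d) (d x y) v = neg_op (dual_rep d) x (neg_op (dual_rep d) y v))
      \<longleftrightarrow> (\<forall>x y w. d (d x y) w = d y (d x w))"
    by (rule dual_identity_iff[where k = 1]) (simp_all add: pairs)
  have lie: "(\<forall>x y v. dual_rep c (commutator c x y) v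
               = vsub (dual_rep c x (dual_rep c y v)) (dual_rep c y (dual_rep c x v)))
      \<longleftrightarrow> (\<forall>x y w. c (commutator c x y) w = vsub (c x (c y w)) (c y (c x w)))"
    by (rule dual_identity_iff[where k = "-1"]) (simp_all add: pairs algebra_simps)
  have mixed1: "(\<forall>x y v. vsc 2 (neg_op (dual_rep d) x (dual_rep c y v))
               = vadd (dual_rep c (d x y) v) (dual_rep c y (neg_op (dual_rep d) x v)))
      \<longleftrightarrow> (\<forall>x y w. vsc 2 (c y (d x w)) = vadd (c (d x y) w) (d x (c y w)))"
    by (rule dual_identity_iff[where k = "-1"]) (simp_all add: pairs algebra_simps)
  have mixed2: "(\<forall>x y v. vsc 2 (neg_op (dual_rep d) (commutator c x y) v)
               = vsub (dual_rep c x (neg_op (dual_rep d) y v)) (dual_rep c y (neg_op (dual_rep d) x v)))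
      \<longleftrightarrow> (\<forall>x y w. vsc 2 (d (commutator c x y) w) = vsub (d x (c y w)) (d y (c x w)))"
    by (rule dual_identity_iff[where k = 1]) (simp_all add: pairs algebra_simps)
  have "(\<forall>x y w. vsc 2 (c y (d x w)) = vadd (c (d x y) w) (d x (c y w)))
      \<longleftrightarrow> (\<forall>x y z. vsc 2 (c x (d y z)) = vadd (c (d z x) y) (d z (c x y)))"
    by (metis comm)
  moreover have "vsc 2 (d (commutator c x y) w) = vsub (vsc 2 (d (c x y) w)) (vsc 2 (d (c y x) w))"
    for x y w
    by (simp add: commutator_def bilinear_op_simps[OF bd] fun_eq_iff algebra_simps)
  ultimately show ?thesis
    unfolding tp_rep_def mult lie mixed1 mixed2
      pre_lie_iff_left_mult_commutator[OF bc, symmetric]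
    using coadjoint_maps_linear[OF bd bc] comm assoc by auto
qed

lemma transposed_poisson_compat_iff_tcpd_third:
  assumes bd: "bilinear_op d" and bc: "bilinear_op c" and comm: "\<And>a b. d a b = d b a"
    and first: "\<forall>x y z. vsc 2 (c x (d y z)) = vadd (c (d z x) y) (d z (c x y))"
    and second: "\<forall>x y z. vsub (vsc 2 (d (c x y) z)) (vsc 2 (d (c y x) z)) = vsub (d x (c y z)) (d y (c x z))"
  shows "vsc 2 (d z (commutator c x y)) = vadd (commutator c (d z x) y) (commutator c x (d z y))
     \<longleftrightarrow> vadd (vsub (vsub (vsc 3 (c y (d z x))) (vsc 3 (c x (d z y)))) (c (d z x) y)) (c (d z y) x) = vzero"
    (is "?L = ?R \<longleftrightarrow> ?T = vzero")
proof -
  have difference: "?L j - ?R j = ?T j" for j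
  proof -
    have "2 * d z (c x y) j - 2 * d z (c y x) j = d x (c y z) j - d y (c x z) j"
      using fun_cong[OF second[rule_format, of x y z], of j] by (simp add: comm[of _ z])
    moreover have "2 * c y (d z x) j = c (d x y) z j + d x (c y z) j"
      using fun_cong[OF first[rule_format, of y z x], of j] by simp
    moreover have "2 * c x (d z y) j = c (d x y) z j + d y (c x z) j"
      using fun_cong[OF first[rule_format, of x z y], of j] by (simp add: comm[of y x])
    ultimately show ?thesis
      by (simp add: commutator_def bilinear_op_simps[OF bd] bilinear_op_simps[OF bc])
  qed
  have "?L = ?R \<longleftrightarrow> (\<forall>j. ?L j - ?R j = 0)" by (simp add: fun_eq_iff)
  also have "\<dots> \<longleftrightarrow> (\<forall>j. ?T j = 0)" by (simp only: difference)
  also have "\<dots> \<longleftrightarrow> ?T = vzero" by (simp only: fun_eq_iff vzero_apply)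
  finally show ?thesis .
qed

theorem mainTheorem17:
  fixes dot circ :: "('n::finite, 'k::field_char_0) vec \<Rightarrow> ('n, 'k) vec \<Rightarrow> ('n, 'k) vec"
  assumes "bilinear_op dot" and "bilinear_op circ"
  shows "(transposed_poisson dot (commutator circ) \<and> pre_lie circ \<and>
            tp_rep dot (commutator circ) (neg_op (dual_rep dot)) (dual_rep circ)
          \<longrightarrow> tcpd dot circ)
       \<and> (tcpd dot circ \<longrightarrow>
            transposed_poisson dot (commutator circ) \<and>
            tp_rep dot (commutator circ) (neg_op (dual_rep dot)) (dual_rep circ))"
proof (intro conjI impI)
  assume hyps: "transposed_poisson dot (commutator circ) \<and> pre_lie circ \<and>
                tp_rep dot (commutator circ) (neg_op (dual_rep dot)) (dual_rep circ)"
  then have ca: "comm_assoc dot" by (simp add: transposed_poisson_def)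
  then have comm: "\<And>a b. dot a b = dot b a" by (simp add: comm_assoc_def)
  from hyps show "tcpd dot circ"
    unfolding tcpd_def transposed_poisson_def tp_rep_coadjoint_iff[OF assms ca]
    using transposed_poisson_compat_iff_tcpd_third[OF assms comm] by blast
next
  assume hyps: "tcpd dot circ"
  then have ca: "comm_assoc dot" by (simp add: tcpd_def)
  then have comm: "\<And>a b. dot a b = dot b a" by (simp add: comm_assoc_def)
  from hyps show "transposed_poisson dot (commutator circ)"
    unfolding tcpd_def transposed_poisson_def
    using lie_alg_commutator[OF assms(2)] transposed_poisson_compat_iff_tcpd_third[OF assms comm]
    by blast
  from hyps show "tp_rep dot (commutator circ) (neg_op (dual_rep dot)) (dual_rep circ)"
    unfolding tcpd_def tp_rep_coadjoint_iff[OF assms ca] by blast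
qed

end
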